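(* Suppose the channel is the binary erasure channel: given $W^{(l_0)}=(\mathbf I_d,\mathbf 0)$, the deployed channel weights are $W'^{(l_0)}=(U,\mathbf 0)$ where $U=\mathrm{diag}(U_1,\dots,U_d)$ with $U_1,\dots,U_d$ i.i.d. $\mathrm{Bernoulli}(1-p_o)$ (i.e. $U_i=0$ with probability $p_o\in[0,1]$, $U_i=1$ otherwise). Take the channel-layer metric $d^{(l_0)}((M',B'),(M,B))=\|M'-M\|_F+\|B'-B\|_2$. Assume that for every $w\in\mathcal W$ the loss $\ell(w,Z)$, $Z\sim P_Z$, is $\sigma$-sub-Gaussian and that for every $z$, $w\mapsto\ell(w,z)$ is $K$-Lipschitz with respect to $d_{\mathcal W}$. Then for every data-independent distribution $Q_{\tilde W}$ on $\tilde{\mathcal W}$, every $k>0$ and every $\epsilon\in(0,1)$, with probability at least $1-\epsilon$ over $S\sim P_Z^n$, $$\Delta\le\frac{k\sigma^2}{2n}+\frac{D(P_{\tilde W|S}\|Q_{\tilde W})-\log\epsilon}{k}+K\sum_{r=1}^d\binom dr p_o^r(1-p_o)^{d-r}\sqrt r.$$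
   Context: Setting. Let $\mathcal Z=\mathcal X\times\mathcal Y$ be an instance space with data distribution $P_Z$, and let $S=(Z_1,\dots,Z_n)\sim P_Z^{n}$ be a training set of $n$ i.i.d. samples. An augmented network has $L+1$ layers with weights $W=(W^{(1)},\dots,W^{(L+1)})\in\mathcal W=\mathcal W^{(1)}\times\cdots\times\mathcal W^{(L+1)}$. A distinguished index $l_0$ is the channel layer: $\mathcal W^{(l_0)}=\mathbb R^{d\times d}\times\mathbb R^{d}$, with weights $W^{(l_0)}=(M^{(l_0)},B^{(l_0)})$ acting on a feature $f\in\mathbb R^d$ by $f\mapsto M^{(l_0)}f+B^{(l_0)}$. The other weights $\tilde W=(W^{(l)})_{l\ne l_0}\in\tilde{\mathcal W}=\prod_{l\neq l_0}\mathcal W^{(l)}$ are the learnable weights. A learning algorithm is a Markov kernel $P_{\tilde W|S}$ from $\mathcal Z^n$ to $\tilde{\mathcal W}$; the channel-free training distribution on $\mathcal W$ is $P_{W|S}=P_{\tilde W|S}\otimes\delta_{(\mathbf I_d,\mathbf 0)}$ (channel layer fixed to identity matrix and zero bias). A channel is a Markov kernel $P_{W'^{(l_0)}|W^{(l_0)}}$ on $\mathcal W^{(l_0)}$; the deployment kernel $P_{W'|W}$ sets $W'^{(l)}=W^{(l)}$ for all $l\ne l_0$ and draws $W'^{(l_0)}\sim P_{W'^{(l_0)}|W^{(l_0)}}(\cdot\,|\,W^{(l_0)})$ independently of everything else. The joint distribution on $\mathcal W\times\mathcal W$ is $P_{W'W|S}(W',W|S)=P_{W'|W}(W'|W)P_{W|S}(W|S)$,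 and $P_{W'|S}$ denotes its marginal in $W'$. For a loss $\ell:\mathcal W\times\mathcal Z\to[0,\infty)$ let $L(w)=\mathbb E_{Z\sim P_Z}[\ell(w,Z)]$ and $\hat L(w,S)=\frac1n\sum_{i=1}^n\ell(w,Z_i)$; for a distribution $P$ on $\mathcal W$, $L(P)=\int L(w)P(dw)$ and $\hat L_S(P)=\int\hat L(w,S)P(dw)$. The wireless generalization error is $\Delta=L(P_{W'|S})-\hat L_S(P_{W|S})$. The metric on $\mathcal W$ is $d_{\mathcal W}(W',W)=\sum_{l=1}^{L+1}d^{(l)}(W'^{(l)},W^{(l)})$ where each $d^{(l)}$ is a metric on $\mathcal W^{(l)}$. "$\sigma$-sub-Gaussian" means $\log\mathbb E[e^{\lambda(\ell(w,Z)-L(w))}]\le\lambda^2\sigma^2/2$ for all $\lambda\in\mathbb R$; "$K$-Lipschitz" means $|\ell(w,z)-\ell(w',z)|\le K\,d_{\mathcal W}(w,w')$. "Data-independent" means not depending on $S$. $D(\cdot\|\cdot)$ is the Kullback–Leibler divergence (natural logarithm). $\|\cdot\|_F$ is the Frobenius norm. *)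

theory Defs
  imports "HOL-Probability.Probability"
begin

type_synonym ('d) chw = "(real^'d^'d) \<times> (real^'d)"

definition frob :: "real^('d::finite)^'d \<Rightarrow> real" where
  "frob M = sqrt (\<Sum>i\<in>UNIV. \<Sum>j\<in>UNIV. (M $ i $ j)^2)"

text \<open>Metric on the whole weight space W = (learnable weights) x (channel layer):
  dt is the sum of the layer metrics over l <> l0, the channel-layer metric is
  ||M'-M||_F + ||B'-B||_2.\<close>
definition dW :: "('w \<Rightarrow> 'w \<Rightarrow> real) \<Rightarrow> ('w \<times> ('d::finite) chw) \<Rightarrow> ('w \<times> ('d::finite) chw) \<Rightarrow> real" where
  "dW dt w' w = dt (fst w') (fst w) + frob (fst (snd w') - fst (snd w)) + norm (snd (snd w') - snd (snd w))"

definition is_metric :: "('w \<Rightarrow> 'w \<Rightarrow> real) \<Rightarrow> bool" where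
  "is_metric dt \<longleftrightarrow> (\<forall>x y. dt x y = 0 \<longleftrightarrow> x = y) \<and> (\<forall>x y. dt x y = dt y x)
      \<and> (\<forall>x y z. dt x z \<le> dt x y + dt y z)"

definition subgaussian :: "'z measure \<Rightarrow> ('z \<Rightarrow> real) \<Rightarrow> real \<Rightarrow> bool" where
  "subgaussian M f \<sigma> \<longleftrightarrow> integrable M f \<and>
     (\<forall>t::real. integrable M (\<lambda>z. exp (t * (f z - (\<integral>x. f x \<partial>M)))) \<and>
        ln (\<integral>z. exp (t * (f z - (\<integral>x. f x \<partial>M))) \<partial>M) \<le> t^2 * \<sigma>^2 / 2)"

definition KL :: "'a measure \<Rightarrow> 'a measure \<Rightarrow> ereal" where
  "KL P Q = (if sets P = sets Q \<and> absolutely_continuous Q P then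
      (let f = (\<lambda>x. enn2real (RN_deriv Q P x)) in
        enn2ereal (\<integral>\<^sup>+x. ennreal (f x * ln (f x)) \<partial>Q)
        - enn2ereal (\<integral>\<^sup>+x. ennreal (- (f x * ln (f x))) \<partial>Q))
    else \<infinity>)"

definition bec :: "real \<Rightarrow> ('d::finite) chw pmf" where
  "bec po = map_pmf (\<lambda>u. ((\<chi> i j. if i = j \<and> u i then 1 else 0), 0))
               (Pi_pmf UNIV False (\<lambda>_. bernoulli_pmf (1 - po)))"

definition popL :: "'z measure \<Rightarrow> ('v \<Rightarrow> 'z \<Rightarrow> real) \<Rightarrow> 'v measure \<Rightarrow> ennreal" where
  "popL PZ loss P = (\<integral>\<^sup>+w. (\<integral>\<^sup>+z. ennreal (loss w z) \<partial>PZ) \<partial>P)"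

definition empL :: "('v \<Rightarrow> 'z \<Rightarrow> real) \<Rightarrow> nat \<Rightarrow> (nat \<Rightarrow> 'z) \<Rightarrow> 'v measure \<Rightarrow> ennreal" where
  "empL loss n S P = (\<integral>\<^sup>+w. ennreal ((1 / real n) * (\<Sum>i<n. loss w (S i))) \<partial>P)"

definition train_dist :: "'w measure \<Rightarrow> ('w \<times> ('d::finite) chw) measure" where
  "train_dist PWt = PWt \<Otimes>\<^sub>M return (count_space UNIV) (mat 1, 0)"

definition deploy_dist :: "'w measure \<Rightarrow> ('d::finite) chw pmf \<Rightarrow> ('w \<times> ('d::finite) chw) measure" where
  "deploy_dist PWt ch = PWt \<Otimes>\<^sub>M measure_pmf ch"

end

theory Submission
  imports Defs
begin

text \<open>
  The learning algorithm never sees the channel: during training the channel layer is the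
  identity (I, 0), so the training-side losses of P_{W|S} are those of the channel-free loss
  l w z = loss (w, (I, 0)) z under P_{W~|S}. For l the classical PAC-Bayes argument applies:
  sub-Gaussianity and Fubini give E_S of the Q-integral of exp (k (L - L_S)) at most
  exp (k^2 sigma^2 / 2n), Markov's inequality makes that integral at most
  exp (k^2 sigma^2 / 2n) / epsilon with probability 1 - epsilon, and the Donsker-Varadhan
  change of measure turns this into the bound for every posterior P at once. Deployment
  replaces (I, 0) by the channel output, which by the Lipschitz property costs at most K times
  the expected channel-layer distance from (I, 0); for the erasure channel that distance is the
  square root of the number of erased coordinates, a Binomial(d, po) variable.
\<close>

section \<open>Donsker-Varadhan change of measure\<close>

lemma mult_le_xlnx_add_exp:
  fixes x y :: real
  assumes "0 \<le> x"
  shows "x * y \<le> x * ln x - x + exp y"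
proof (cases "x = 0")
  case False
  then have x: "x > 0" using assms by simp
  have "x * (1 + (y - ln x)) \<le> x * exp (y - ln x)"
    using x exp_ge_add_one_self[of "y - ln x"] by simp
  also have "\<dots> = exp y" using x by (simp add: exp_diff)
  finally show ?thesis by (simp add: algebra_simps)
qed simp

lemma xlnx_ge_minus_one:
  fixes x :: real
  assumes "0 \<le> x"
  shows "-1 \<le> x * ln x"
  using mult_le_xlnx_add_exp[OF assms, of 0] assms by simp

text \<open>
  The inequality above at y = a - b - c, with every term moved to the side on which it is
  nonnegative, so that it can be integrated term by term in ennreal.
\<close>
lemma ennreal_mult_le_xlnx_add_exp:
  fixes x a b c :: real
  assumes "0 \<le> x" "0 \<le> a" "0 \<le> b"
  shows "ennreal x + (ennreal (x * a) + ennreal (- (x * ln x)) + ennreal (x * - c))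
    \<le> ennreal (exp (a - b - c)) + (ennreal (x * b) + ennreal (x * ln x) + ennreal (x * c))"
proof -
  have "x * (a - b - c) \<le> x * ln x - x + exp (a - b - c)"
    using assms(1) by (rule mult_le_xlnx_add_exp)
  moreover have "max 0 (- (x * ln x)) = max 0 (x * ln x) - x * ln x"
    "max 0 (x * - c) = max 0 (x * c) - x * c" "x * (a - b - c) = x * a - x * b - x * c"
    by (auto simp: max_def algebra_simps)
  ultimately have "x + (x * a + max 0 (- (x * ln x)) + max 0 (x * - c))
      \<le> exp (a - b - c) + (x * b + max 0 (x * ln x) + max 0 (x * c))"
    by linarith
  moreover have
    "ennreal x + (ennreal (x * a) + ennreal (- (x * ln x)) + ennreal (x * - c))
      = ennreal (x + (x * a + max 0 (- (x * ln x)) + max 0 (x * - c)))"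
    "ennreal (exp (a - b - c)) + (ennreal (x * b) + ennreal (x * ln x) + ennreal (x * c))
      = ennreal (exp (a - b - c) + (x * b + max 0 (x * ln x) + max 0 (x * c)))"
    using assms by (simp_all add: ennreal_plus ennreal_max_0)
  ultimately show ?thesis by (simp add: ennreal_leI)
qed

lemma enn2ereal_le_from_scaled_ineq:
  fixes H E p q :: ennreal and c k :: real
  assumes ineq: "ennreal k * H + q + ennreal (- c) \<le> ennreal k * E + p + ennreal c"
    and q: "q \<noteq> \<infinity>" and k: "k > 0"
  shows "enn2ereal H \<le> enn2ereal E + (enn2ereal p - enn2ereal q + ereal c) / ereal k"
proof (cases "E = \<infinity> \<or> p = \<infinity>")
  case True
  have "enn2ereal q \<noteq> \<infinity>" using q by simp
  then have "enn2ereal E + (enn2ereal p - enn2ereal q + ereal c) / ereal k = \<infinity>"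
    using True k by (cases "enn2ereal q") (auto simp: ereal_divide_eq)
  then show ?thesis by (simp only: ereal_less_eq(1))
next
  case False
  then obtain Er pr qr where E: "E = ennreal Er" "0 \<le> Er" and p: "p = ennreal pr" "0 \<le> pr"
    and q: "q = ennreal qr" "0 \<le> qr"
    using q by (cases E; cases p; cases q) auto
  have "ennreal k * H \<le> ennreal k * E + p + ennreal c"
    using ineq by (rule order_trans[rotated]) (simp add: add.assoc)
  also have "\<dots> < \<infinity>" using E p by (simp add: ennreal_mult_less_top)
  finally obtain Hr where H: "H = ennreal Hr" "0 \<le> Hr"
    using k by (cases H) (auto simp: ennreal_mult_less_top)
  have "ennreal k * H + q + ennreal (- c) = ennreal (k * Hr + qr + max 0 (- c))"
    "ennreal k * E + p + ennreal c = ennreal (k * Er + pr + max 0 c)"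
    using k H E p q by (simp_all add: ennreal_mult ennreal_plus ennreal_max_0)
  then have "ennreal (k * Hr + qr + max 0 (- c)) \<le> ennreal (k * Er + pr + max 0 c)"
    using ineq by simp
  then have "k * Hr + qr + max 0 (- c) \<le> k * Er + pr + max 0 c"
    using k E p by (subst (asm) ennreal_le_iff) auto
  then have "k * Hr \<le> k * Er + (pr - qr + c)"
    by (simp add: max_def split: if_splits)
  also have "\<dots> = k * (Er + (pr - qr + c) / k)"
    using k by (simp add: field_simps)
  finally have "k * Hr \<le> k * (Er + (pr - qr + c) / k)" .
  then have "Hr \<le> Er + (pr - qr + c) / k" using k by simp
  then show ?thesis using H E p q k by simp
qed

lemma nn_integral_neg_xlnx_le_one:
  fixes f :: "'a \<Rightarrow> real"
  assumes "prob_space M" and "\<And>x. 0 \<le> f x"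
  shows "(\<integral>\<^sup>+x. ennreal (- (f x * ln (f x))) \<partial>M) \<le> 1"
proof -
  have "(\<integral>\<^sup>+x. ennreal (- (f x * ln (f x))) \<partial>M) \<le> (\<integral>\<^sup>+x. 1 \<partial>M)"
    using xlnx_ge_minus_one[OF assms(2)] by (intro nn_integral_mono) (simp add: ennreal_le_1)
  then show ?thesis using assms(1) by (simp add: prob_space.emeasure_space_1)
qed

lemma KL_neq_MInfty:
  assumes "prob_space Q"
  shows "KL P Q \<noteq> -\<infinity>"
proof -
  define f where "f x = enn2real (RN_deriv Q P x)" for x
  define pos where "pos = (\<integral>\<^sup>+x. ennreal (f x * ln (f x)) \<partial>Q)"
  define neg where "neg = (\<integral>\<^sup>+x. ennreal (- (f x * ln (f x))) \<partial>Q)"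
  have "neg \<noteq> \<infinity>"
    using nn_integral_neg_xlnx_le_one[OF assms, of f] by (auto simp: neg_def f_def top_unique)
  then have "enn2ereal pos - enn2ereal neg \<noteq> -\<infinity>"
    by (cases pos; cases neg) auto
  then show ?thesis
    unfolding KL_def Let_def f_def[symmetric] pos_def[symmetric] neg_def[symmetric] by simp
qed

lemma nn_integral_RN_deriv_real:
  assumes "sigma_finite_measure P" "sigma_finite_measure Q"
    and ac: "absolutely_continuous Q P" and sets: "sets P = sets Q"
    and [measurable]: "g \<in> borel_measurable Q"
  shows "(\<integral>\<^sup>+x. g x \<partial>P) = (\<integral>\<^sup>+x. ennreal (enn2real (RN_deriv Q P x)) * g x \<partial>Q)"
proof -
  interpret Q: sigma_finite_measure Q by fact
  have "AE x in Q. RN_deriv Q P x = ennreal (enn2real (RN_deriv Q P x))"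
    using Q.RN_deriv_finite[OF assms(1) ac sets] by eventually_elim (auto simp: less_top)
  then have "(\<integral>\<^sup>+x. RN_deriv Q P x * g x \<partial>Q) = (\<integral>\<^sup>+x. ennreal (enn2real (RN_deriv Q P x)) * g x \<partial>Q)"
    by (intro nn_integral_cong_AE) auto
  then show ?thesis using Q.RN_deriv_nn_integral[OF ac sets] by simp
qed

lemma KL_change_of_measure:
  assumes P: "prob_space P" and Q: "prob_space Q"
    and [measurable]: "h \<in> borel_measurable Q" "e \<in> borel_measurable Q"
    and h0: "\<And>w. 0 \<le> h w" and e0: "\<And>w. 0 \<le> e w" and k: "k > 0"
    and mgf: "(\<integral>\<^sup>+w. ennreal (exp (k * (h w - e w))) \<partial>Q) \<le> ennreal (exp c)"
  shows "enn2ereal (\<integral>\<^sup>+w. ennreal (h w) \<partial>P)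
    \<le> enn2ereal (\<integral>\<^sup>+w. ennreal (e w) \<partial>P) + (KL P Q + ereal c) / ereal k"
proof (cases "sets P = sets Q \<and> absolutely_continuous Q P")
  case False
  then have "KL P Q = \<infinity>" unfolding KL_def by auto
  then have "(KL P Q + ereal c) / ereal k = \<infinity>" using k by simp
  then show ?thesis by (simp only: plus_ereal.simps(3) ereal_less_eq(1))
next
  case True
  interpret Q: prob_space Q by fact
  interpret P: prob_space P by fact
  define f where "f x = enn2real (RN_deriv Q P x)" for x
  have [measurable]: "f \<in> borel_measurable Q" unfolding f_def by measurable
  have f0: "0 \<le> f x" for x unfolding f_def by simp
  define pos where "pos = (\<integral>\<^sup>+x. ennreal (f x * ln (f x)) \<partial>Q)"
  define neg where "neg = (\<integral>\<^sup>+x. ennreal (- (f x * ln (f x))) \<partial>Q)"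
  have KL: "KL P Q = enn2ereal pos - enn2ereal neg"
    unfolding KL_def pos_def neg_def f_def using True by (simp add: Let_def)
  have density: "(\<integral>\<^sup>+x. ennreal (f x * a x) \<partial>Q) = (\<integral>\<^sup>+x. ennreal (a x) \<partial>P)"
    if [measurable]: "a \<in> borel_measurable Q" for a
    using nn_integral_RN_deriv_real[OF P.sigma_finite_measure_axioms Q.sigma_finite_measure_axioms]
      True f0 by (simp add: ennreal_mult' f_def)
  have density_const: "(\<integral>\<^sup>+x. ennreal (f x * a) \<partial>Q) = ennreal a" for a
    using density[of "\<lambda>_. a"] by (simp add: P.emeasure_space_1)
  have density_scaled: "(\<integral>\<^sup>+x. ennreal (f x * (k * a x)) \<partial>Q) = ennreal k * (\<integral>\<^sup>+x. ennreal (a x) \<partial>P)"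
    if [measurable]: "a \<in> borel_measurable Q" and "\<And>x. 0 \<le> a x" for a
    using density[of "\<lambda>x. k * a x"] k that(2)
    by (simp add: ennreal_mult nn_integral_cmult measurable_cong_sets[OF True[THEN conjunct1]])
  have exp_le_1: "(\<integral>\<^sup>+x. ennreal (exp (k * h x - k * e x - c)) \<partial>Q) \<le> 1"
  proof -
    have "(\<integral>\<^sup>+x. ennreal (exp (k * h x - k * e x - c)) \<partial>Q)
        = ennreal (exp (- c)) * (\<integral>\<^sup>+x. ennreal (exp (k * (h x - e x))) \<partial>Q)"
      by (simp add: nn_integral_cmult[symmetric] ennreal_mult[symmetric] exp_add[symmetric] algebra_simps)
    also have "\<dots> \<le> ennreal (exp (- c)) * ennreal (exp c)" using mgf by (rule mult_left_mono) simp
    also have "\<dots> = 1" by (simp flip: ennreal_mult exp_add)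
    finally show ?thesis .
  qed
  \<comment> \<open>integrate ennreal_mult_le_xlnx_add_exp at x = dP/dQ, a = k h, b = k e against Q\<close>
  have "1 + (ennreal k * (\<integral>\<^sup>+w. ennreal (h w) \<partial>P) + neg + ennreal (- c))
      = (\<integral>\<^sup>+x. ennreal (f x) + (ennreal (f x * (k * h x)) + ennreal (- (f x * ln (f x)))
          + ennreal (f x * - c)) \<partial>Q)"
    using density_const[of 1] density_const[of "- c"]
    by (simp add: nn_integral_add density_scaled h0 neg_def)
  also have "\<dots> \<le> (\<integral>\<^sup>+x. ennreal (exp (k * h x - k * e x - c)) + (ennreal (f x * (k * e x))
          + ennreal (f x * ln (f x)) + ennreal (f x * c)) \<partial>Q)"
    using f0 h0 e0 k by (intro nn_integral_mono ennreal_mult_le_xlnx_add_exp) auto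
  also have "\<dots> \<le> 1 + (ennreal k * (\<integral>\<^sup>+w. ennreal (e w) \<partial>P) + pos + ennreal c)"
    using exp_le_1 by (simp add: nn_integral_add density_scaled e0 density_const pos_def add_right_mono)
  finally have "ennreal k * (\<integral>\<^sup>+w. ennreal (h w) \<partial>P) + neg + ennreal (- c)
      \<le> ennreal k * (\<integral>\<^sup>+w. ennreal (e w) \<partial>P) + pos + ennreal c"
    by (simp add: ennreal_add_left_cancel_le)
  moreover have "neg \<noteq> \<infinity>"
    using nn_integral_neg_xlnx_le_one[OF Q, of f] f0 by (auto simp: neg_def top_unique)
  ultimately show ?thesis
    unfolding KL using k by (rule enn2ereal_le_from_scaled_ineq)
qed

section \<open>PAC-Bayes bound for sub-Gaussian losses\<close>

lemma subgaussian_mgf_le: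
  assumes "subgaussian M f \<sigma>"
  shows "(\<integral>z. exp (t * (f z - (\<integral>x. f x \<partial>M))) \<partial>M) \<le> exp (t^2 * \<sigma>^2 / 2)"
proof -
  define I where "I = (\<integral>z. exp (t * (f z - (\<integral>x. f x \<partial>M))) \<partial>M)"
  have ln_I: "ln I \<le> t^2 * \<sigma>^2 / 2" using assms unfolding subgaussian_def I_def by blast
  show ?thesis
  proof (cases "I > 0")
    case True
    then have "I = exp (ln I)" by simp
    also have "\<dots> \<le> exp (t^2 * \<sigma>^2 / 2)" using ln_I by simp
    finally show ?thesis unfolding I_def .
  next
    case False
    then have "I \<le> 0" by simp
    also have "0 < exp (t^2 * \<sigma>^2 / 2)" by simp
    finally show ?thesis unfolding I_def by simp
  qed
qed

lemma nn_integral_exp_sum_subgaussian: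
  fixes f :: "'z \<Rightarrow> real"
  assumes M: "prob_space M" and subg: "subgaussian M f \<sigma>"
  shows "(\<integral>\<^sup>+S. ennreal (exp (t * (\<Sum>i<n. f (S i) - (\<integral>x. f x \<partial>M)))) \<partial>PiM {..<n} (\<lambda>_. M))
    \<le> ennreal (exp (real n * (t^2 * \<sigma>^2 / 2)))"
proof -
  interpret M: prob_space M by fact
  interpret product_sigma_finite "\<lambda>_::nat. M"
    by (simp add: product_sigma_finite_def M.sigma_finite_measure_axioms)
  define g where "g = (\<lambda>z. exp (t * (f z - (\<integral>x. f x \<partial>M))))"
  have g_int: "integrable M g" using subg unfolding subgaussian_def g_def by blast
  then have [measurable]: "g \<in> borel_measurable M" by (rule borel_measurable_integrable)
  have "(\<integral>\<^sup>+S. ennreal (exp (t * (\<Sum>i<n. f (S i) - (\<integral>x. f x \<partial>M)))) \<partial>PiM {..<n} (\<lambda>_. M))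
      = (\<integral>\<^sup>+S. (\<Prod>i<n. ennreal (g (S i))) \<partial>PiM {..<n} (\<lambda>_. M))"
    by (simp add: g_def sum_distrib_left exp_sum prod_ennreal)
  also have "\<dots> = (\<Prod>i<n. \<integral>\<^sup>+z. ennreal (g z) \<partial>M)"
    by (rule product_nn_integral_prod) auto
  also have "\<dots> = ennreal ((\<integral>z. g z \<partial>M) ^ n)"
    using nn_integral_eq_integral[OF g_int] by (simp add: g_def ennreal_power)
  also have "\<dots> \<le> ennreal (exp (t^2 * \<sigma>^2 / 2) ^ n)"
    using subgaussian_mgf_le[OF subg] by (intro ennreal_leI power_mono) (auto simp: g_def)
  also have "\<dots> = ennreal (exp (real n * (t^2 * \<sigma>^2 / 2)))"
    by (simp only: exp_of_nat_mult)
  finally show ?thesis .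
qed

lemma nn_integral_exp_generalization_gap:
  fixes l :: "'w \<Rightarrow> 'z \<Rightarrow> real"
  assumes PZ: "prob_space PZ" and n: "n > 0" and Q: "prob_space Q"
    and l_meas[measurable]: "(\<lambda>(w, z). l w z) \<in> borel_measurable (Q \<Otimes>\<^sub>M PZ)"
    and subg: "\<And>w. subgaussian PZ (l w) \<sigma>"
  shows "(\<integral>\<^sup>+S. \<integral>\<^sup>+w. ennreal (exp (k * ((\<integral>z. l w z \<partial>PZ) - 1 / real n * (\<Sum>i<n. l w (S i))))) \<partial>Q
      \<partial>PiM {..<n} (\<lambda>_. PZ)) \<le> ennreal (exp (k^2 * \<sigma>^2 / (2 * real n)))"
    (is "(\<integral>\<^sup>+S. \<integral>\<^sup>+w. ?F S w \<partial>Q \<partial>?\<Omega>) \<le> _")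
proof -
  interpret PZ: prob_space PZ by fact
  interpret Q: prob_space Q by fact
  interpret \<Omega>: prob_space ?\<Omega> using PZ by (rule prob_space_PiM)
  interpret \<Omega>Q: pair_sigma_finite ?\<Omega> Q ..
  have F_meas: "(\<lambda>(S, w). ?F S w) \<in> borel_measurable (?\<Omega> \<Otimes>\<^sub>M Q)" by measurable
  have gap: "k * ((\<integral>z. l w z \<partial>PZ) - 1 / real n * (\<Sum>i<n. l w (S i)))
      = - (k / real n) * (\<Sum>i<n. l w (S i) - (\<integral>z. l w z \<partial>PZ))" for w S
    using n by (simp add: sum_subtractf field_simps)
  have "(\<integral>\<^sup>+S. \<integral>\<^sup>+w. ?F S w \<partial>Q \<partial>?\<Omega>) = (\<integral>\<^sup>+w. \<integral>\<^sup>+S. ?F S w \<partial>?\<Omega> \<partial>Q)"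
    using \<Omega>Q.Fubini'[OF F_meas] by simp
  also have "\<dots> \<le> (\<integral>\<^sup>+w. ennreal (exp (real n * ((- (k / real n))^2 * \<sigma>^2 / 2))) \<partial>Q)"
    unfolding gap using nn_integral_exp_sum_subgaussian[OF PZ subg]
    by (intro nn_integral_mono) blast
  also have "\<dots> = ennreal (exp (k^2 * \<sigma>^2 / (2 * real n)))"
    using n by (simp add: Q.emeasure_space_1 power2_eq_square field_simps)
  finally show ?thesis .
qed

lemma prob_nn_integral_Markov:
  assumes "prob_space M" and [measurable]: "X \<in> borel_measurable M"
    and int_X: "(\<integral>\<^sup>+x. X x \<partial>M) \<le> ennreal C" and C: "0 < C" and \<epsilon>: "0 < \<epsilon>"
  shows "1 - \<epsilon> \<le> measure M {x \<in> space M. X x \<le> ennreal (C / \<epsilon>)}"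
proof -
  interpret prob_space M by fact
  define A where "A = {x \<in> space M. X x \<le> ennreal (C / \<epsilon>)}"
  have A: "A \<in> sets M" unfolding A_def by measurable
  have "space M - A \<subseteq> {x \<in> space M. 1 \<le> ennreal (\<epsilon> / C) * X x}"
  proof safe
    fix x assume "x \<in> space M" "x \<notin> A"
    then have "ennreal (C / \<epsilon>) \<le> X x" unfolding A_def by auto
    then have "ennreal (\<epsilon> / C) * ennreal (C / \<epsilon>) \<le> ennreal (\<epsilon> / C) * X x"
      by (rule mult_left_mono) simp
    then show "1 \<le> ennreal (\<epsilon> / C) * X x"
      using C \<epsilon> by (simp add: ennreal_mult'[symmetric])
  qed
  then have "emeasure M (space M - A) \<le> emeasure M {x \<in> space M. 1 \<le> ennreal (\<epsilon> / C) * X x}"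
    by (intro emeasure_mono) auto
  also have "\<dots> \<le> ennreal (\<epsilon> / C) * (\<integral>\<^sup>+x. X x * indicator (space M) x \<partial>M)"
    by (rule nn_integral_Markov_inequality) auto
  also have "\<dots> = ennreal (\<epsilon> / C) * (\<integral>\<^sup>+x. X x \<partial>M)"
    by (intro arg_cong2[where f = "(*)"] nn_integral_cong) simp_all
  also have "\<dots> \<le> ennreal (\<epsilon> / C) * ennreal C" using int_X by (rule mult_left_mono) simp
  also have "\<dots> = ennreal \<epsilon>" using C \<epsilon> by (simp add: ennreal_mult'[symmetric])
  finally have "measure M (space M - A) \<le> \<epsilon>"
    using \<epsilon> by (simp add: emeasure_eq_measure)
  then show ?thesis using prob_compl[OF A] unfolding A_def by simp
qed

lemma pac_bayes_subgaussian:
  fixes PZ :: "'z measure" and Wt Q :: "'w measure" and l :: "'w \<Rightarrow> 'z \<Rightarrow> real"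
  assumes PZ: "prob_space PZ" and n: "n > 0" and Q: "Q \<in> space (prob_algebra Wt)"
    and l_nonneg: "\<And>w z. 0 \<le> l w z"
    and l_meas: "(\<lambda>(w, z). l w z) \<in> borel_measurable (Wt \<Otimes>\<^sub>M PZ)"
    and subg: "\<And>w. subgaussian PZ (l w) \<sigma>"
    and k: "k > 0" and \<epsilon>: "\<epsilon> > 0"
  obtains A where "A \<in> sets (PiM {..<n} (\<lambda>_. PZ))" "1 - \<epsilon> \<le> measure (PiM {..<n} (\<lambda>_. PZ)) A"
    "\<And>S P. S \<in> A \<Longrightarrow> P \<in> space (prob_algebra Wt) \<Longrightarrow>
       enn2ereal (popL PZ l P) \<le> enn2ereal (empL l n S P) + ereal (k * \<sigma>^2 / (2 * real n))
         + (KL P Q - ereal (ln \<epsilon>)) / ereal k"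
proof -
  interpret PZ: prob_space PZ by fact
  interpret Q: prob_space Q using Q by (simp add: space_prob_algebra)
  have sets_Q: "sets Q = sets Wt" using Q by (simp add: space_prob_algebra)
  define \<Omega> where "\<Omega> = PiM {..<n} (\<lambda>_. PZ)"
  interpret \<Omega>: prob_space \<Omega> unfolding \<Omega>_def using PZ by (rule prob_space_PiM)
  have [measurable]: "(\<lambda>(w, z). l w z) \<in> borel_measurable (Q \<Otimes>\<^sub>M PZ)"
    using l_meas by (simp add: measurable_cong_sets[OF sets_pair_measure_cong[OF sets_Q refl] refl])
  define h where "h w = (\<integral>z. l w z \<partial>PZ)" for w
  define e where "e S w = 1 / real n * (\<Sum>i<n. l w (S i))" for S w
  define X where "X S = (\<integral>\<^sup>+w. ennreal (exp (k * (h w - e S w))) \<partial>Q)" for S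
  define c where "c = k^2 * \<sigma>^2 / (2 * real n) - ln \<epsilon>"
  have [measurable]: "X \<in> borel_measurable \<Omega>"
    unfolding X_def h_def e_def \<Omega>_def by measurable
  have "(\<integral>\<^sup>+S. X S \<partial>\<Omega>) \<le> ennreal (exp (k^2 * \<sigma>^2 / (2 * real n)))"
    unfolding X_def h_def e_def \<Omega>_def
    using nn_integral_exp_generalization_gap[OF PZ n Q.prob_space_axioms _ subg] by simp
  then have "1 - \<epsilon> \<le> measure \<Omega> {S \<in> space \<Omega>. X S \<le> ennreal (exp c)}"
    using prob_nn_integral_Markov[OF \<Omega>.prob_space_axioms, of X] \<epsilon>
    by (simp add: c_def exp_diff)
  moreover have "{S \<in> space \<Omega>. X S \<le> ennreal (exp c)} \<in> sets \<Omega>" by measurable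
  moreover have "enn2ereal (popL PZ l P) \<le> enn2ereal (empL l n S P)
      + ereal (k * \<sigma>^2 / (2 * real n)) + (KL P Q - ereal (ln \<epsilon>)) / ereal k"
    if S: "S \<in> space \<Omega>" "X S \<le> ennreal (exp c)" and P: "P \<in> space (prob_algebra Wt)" for S P
  proof -
    have "S i \<in> space PZ" if "i < n" for i using S that by (auto simp: \<Omega>_def space_PiM)
    then have e_meas: "e S \<in> borel_measurable Q" unfolding e_def by measurable
    have h_meas: "h \<in> borel_measurable Q" unfolding h_def by measurable
    have popL: "popL PZ l P = (\<integral>\<^sup>+w. ennreal (h w) \<partial>P)"
      unfolding popL_def h_def using subg l_nonneg
      by (intro nn_integral_cong nn_integral_eq_integral) (auto simp: subgaussian_def)
    have "enn2ereal (\<integral>\<^sup>+w. ennreal (h w) \<partial>P)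
        \<le> enn2ereal (\<integral>\<^sup>+w. ennreal (e S w) \<partial>P) + (KL P Q + ereal c) / ereal k"
      using P l_nonneg S(2)[unfolded X_def]
      by (intro KL_change_of_measure[OF _ Q.prob_space_axioms h_meas e_meas _ _ k])
        (auto simp: space_prob_algebra h_def e_def sum_nonneg)
    also have "(KL P Q + ereal c) / ereal k
        = ereal (k * \<sigma>^2 / (2 * real n)) + (KL P Q - ereal (ln \<epsilon>)) / ereal k"
      using KL_neq_MInfty[OF Q.prob_space_axioms, of P] k n
      by (cases "KL P Q") (simp_all add: c_def field_simps power2_eq_square)
    finally show ?thesis
      unfolding popL empL_def e_def by (simp add: add.assoc)
  qed
  ultimately show ?thesis using that unfolding \<Omega>_def by blast
qed

section \<open>The binary erasure channel\<close>

definition chw_dist_id :: "'d::finite chw \<Rightarrow> real" where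
  "chw_dist_id c = frob (fst c - mat 1) + norm (snd c)"

lemma chw_dist_id_nonneg: "0 \<le> chw_dist_id c"
  unfolding chw_dist_id_def frob_def by (simp add: sum_nonneg)

lemma map_pmf_Not_bernoulli_pmf:
  assumes "0 \<le> p" "p \<le> 1"
  shows "map_pmf Not (bernoulli_pmf p) = bernoulli_pmf (1 - p)"
proof (rule pmf_eqI)
  fix b :: bool
  have "pmf (map_pmf Not (bernoulli_pmf p)) b = pmf (bernoulli_pmf p) (\<not> b)"
    using pmf_map_inj'[of Not "bernoulli_pmf p" "\<not> b"] by (simp add: inj_def)
  then show "pmf (map_pmf Not (bernoulli_pmf p)) b = pmf (bernoulli_pmf (1 - p)) b"
    using assms by (cases b) simp_all
qed

lemma nn_integral_binomial_pmf:
  assumes "0 \<le> p" "p \<le> 1"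
  shows "(\<integral>\<^sup>+r. ennreal (f r) \<partial>binomial_pmf n p)
    = (\<Sum>r\<le>n. ennreal (f r) * ennreal (real (n choose r) * p^r * (1 - p)^(n - r)))"
  using assms set_pmf_binomial_eq[OF assms, of n]
  by (subst nn_integral_measure_pmf_support[of "{..n}"]) (auto split: if_splits)

lemma chw_dist_id_erasure:
  "chw_dist_id (((\<chi> i j. if i = j \<and> u i then 1 else 0), 0) :: 'd::finite chw)
    = sqrt (real (card {i. \<not> u i}))"
proof -
  have "((if i = j \<and> u i then 1 else 0) - (if i = j then 1 else 0))^2
      = (if i = j then if u i then 0 else 1 else (0::real))" for i j :: 'd
    by auto
  then have "(\<Sum>i\<in>UNIV. \<Sum>j\<in>UNIV. ((if i = j \<and> u i then 1 else 0) - (if i = j then 1 else 0))^2)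
      = (\<Sum>i\<in>UNIV. if u i then 0 else (1::real))"
    by (simp add: sum.delta sum.delta')
  also have "\<dots> = real (card {i. \<not> u i})"
    by (simp add: sum.If_cases Collect_neg_eq Compl_eq_Diff_UNIV)
  finally show ?thesis by (simp add: chw_dist_id_def frob_def mat_def)
qed

lemma nn_integral_chw_dist_id_bec:
  assumes po: "0 \<le> po" "po \<le> 1"
  shows "(\<integral>\<^sup>+c. ennreal (chw_dist_id c) \<partial>bec po :: 'd::finite chw pmf)
    = ennreal (\<Sum>r=1..CARD('d). real (CARD('d) choose r) * po^r * (1 - po)^(CARD('d) - r) * sqrt (real r))"
proof -
  \<comment> \<open>the erasure pattern is i.i.d. Bernoulli(po), so the number of erasures is Binomial(d, po)\<close>
  define erased :: "('d \<Rightarrow> bool) pmf" where "erased = Pi_pmf UNIV True (\<lambda>_. bernoulli_pmf po)"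
  have "erased = map_pmf ((\<circ>) Not) (Pi_pmf UNIV False (\<lambda>_. bernoulli_pmf (1 - po)))"
    unfolding erased_def using po
    by (subst Pi_pmf_map[symmetric]) (simp_all add: map_pmf_Not_bernoulli_pmf)
  then have "(\<integral>\<^sup>+c. ennreal (chw_dist_id c) \<partial>bec po :: 'd chw pmf)
      = (\<integral>\<^sup>+e. ennreal (sqrt (real (card {i. e i}))) \<partial>erased)"
    by (simp add: bec_def chw_dist_id_erasure comp_def)
  also have "\<dots> = (\<integral>\<^sup>+r. ennreal (sqrt (real r)) \<partial>binomial_pmf CARD('d) po)"
    unfolding erased_def using po by (subst binomial_pmf_altdef'[of UNIV]) auto
  also have "\<dots> = (\<Sum>r\<le>CARD('d). ennreal (real (CARD('d) choose r) * po^r * (1 - po)^(CARD('d) - r) * sqrt (real r)))"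
    using po by (simp add: nn_integral_binomial_pmf ennreal_mult'[symmetric] mult_ac)
  also have "\<dots> = ennreal (\<Sum>r=1..CARD('d). real (CARD('d) choose r) * po^r * (1 - po)^(CARD('d) - r) * sqrt (real r))"
    using po by (simp add: atMost_atLeast0 sum.atLeast_Suc_atMost sum_ennreal)
  finally show ?thesis .
qed

section \<open>Training and deployment distributions\<close>

lemma nn_integral_train_dist:
  fixes g :: "'w \<times> 'd::finite chw \<Rightarrow> ennreal"
  assumes "g \<in> borel_measurable (P \<Otimes>\<^sub>M count_space UNIV)"
  shows "(\<integral>\<^sup>+x. g x \<partial>train_dist P) = (\<integral>\<^sup>+w. g (w, (mat 1, 0)) \<partial>P)"
proof -
  define R where "R = return (count_space UNIV) ((mat 1, 0) :: 'd chw)"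
  interpret R: prob_space R unfolding R_def by (rule prob_space_return) simp
  have "g \<in> borel_measurable (P \<Otimes>\<^sub>M R)"
    using assms by (simp add: R_def measurable_cong_sets[OF sets_pair_measure_cong[OF refl sets_return]])
  then have "(\<integral>\<^sup>+x. g x \<partial>(P \<Otimes>\<^sub>M R)) = (\<integral>\<^sup>+w. \<integral>\<^sup>+c. g (w, c) \<partial>R \<partial>P)"
    by (rule R.nn_integral_fst[symmetric])
  then show ?thesis
    unfolding train_dist_def R_def by (simp add: nn_integral_return)
qed

lemma popL_train_dist:
  assumes "prob_space PZ" and "sets P = sets Wt"
    and loss_meas: "(\<lambda>(x, z). loss x z) \<in> borel_measurable ((Wt \<Otimes>\<^sub>M count_space UNIV) \<Otimes>\<^sub>M PZ)"
  shows "popL PZ loss (train_dist P) = popL PZ (\<lambda>w. loss (w, (mat 1, 0))) P"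
proof -
  interpret PZ: prob_space PZ by fact
  have "(\<lambda>x. \<integral>\<^sup>+z. ennreal (loss x z) \<partial>PZ) \<in> borel_measurable (Wt \<Otimes>\<^sub>M count_space UNIV)"
    using loss_meas by measurable
  then show ?thesis unfolding popL_def
    by (intro nn_integral_train_dist) (simp add: measurable_cong_sets[OF sets_pair_measure_cong[OF assms(2) refl]])
qed

lemma empL_train_dist:
  assumes "sets P = sets Wt" and "\<And>i. i < n \<Longrightarrow> S i \<in> space PZ"
    and loss_meas: "(\<lambda>(x, z). loss x z) \<in> borel_measurable ((Wt \<Otimes>\<^sub>M count_space UNIV) \<Otimes>\<^sub>M PZ)"
  shows "empL loss n S (train_dist P) = empL (\<lambda>w. loss (w, (mat 1, 0))) n S P"
proof -
  have "(\<lambda>x. ennreal (1 / real n * (\<Sum>i<n. loss x (S i)))) \<in> borel_measurable (Wt \<Otimes>\<^sub>M count_space UNIV)"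
    using loss_meas assms(2) by measurable
  then show ?thesis unfolding empL_def
    by (intro nn_integral_train_dist) (simp add: measurable_cong_sets[OF sets_pair_measure_cong[OF assms(1) refl]])
qed

lemma Lipschitz_dW_const_nonneg:
  fixes g :: "'w \<times> 'd::finite chw \<Rightarrow> real"
  assumes lip: "\<And>x x'. \<bar>g x - g x'\<bar> \<le> K * dW dt x x'" and dt: "\<And>w. dt w w = 0"
  shows "0 \<le> K"
proof -
  define b :: "real^'d" where "b = (\<chi> i. 1)"
  have "norm b > 0" unfolding b_def by (simp add: vec_eq_iff)
  moreover have "0 \<le> K * norm b"
    using lip[of "(undefined, (mat 1, 0))" "(undefined, (mat 1, b))"] dt
    by (simp add: dW_def frob_def)
  ultimately show ?thesis by (simp add: zero_le_mult_iff)
qed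

lemma popL_deploy_dist_le:
  fixes loss :: "'w \<times> 'd::finite chw \<Rightarrow> 'z \<Rightarrow> real" and ch :: "'d chw pmf"
  assumes PZ: "prob_space PZ" and P: "prob_space P" "sets P = sets Wt"
    and loss_nonneg: "\<And>x z. 0 \<le> loss x z"
    and loss_meas: "(\<lambda>(x, z). loss x z) \<in> borel_measurable ((Wt \<Otimes>\<^sub>M count_space UNIV) \<Otimes>\<^sub>M PZ)"
    and lip: "\<And>z x x'. \<bar>loss x z - loss x' z\<bar> \<le> K * dW dt x x'"
    and dt: "\<And>w. dt w w = 0" and K: "0 \<le> K"
  shows "popL PZ loss (deploy_dist P ch)
    \<le> popL PZ loss (train_dist P) + ennreal K * (\<integral>\<^sup>+c. ennreal (chw_dist_id c) \<partial>ch)"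
proof -
  interpret PZ: prob_space PZ by fact
  interpret P: prob_space P by fact
  interpret Pch: pair_sigma_finite P "measure_pmf ch" ..
  define I :: "'d chw" where "I = (mat 1, 0)"
  define L where "L x = (\<integral>\<^sup>+z. ennreal (loss x z) \<partial>PZ)" for x
  have sets_Pch: "sets (P \<Otimes>\<^sub>M measure_pmf ch) = sets (Wt \<Otimes>\<^sub>M count_space UNIV)"
    using P(2) by (intro sets_pair_measure_cong) simp_all
  have [measurable]: "L \<in> borel_measurable (P \<Otimes>\<^sub>M measure_pmf ch)"
    unfolding L_def measurable_cong_sets[OF sets_Pch refl] using loss_meas by measurable
  have [measurable]: "chw_dist_id \<in> borel_measurable (count_space UNIV)" by simp
  have L_le: "L (w, c) \<le> L (w, I) + ennreal K * ennreal (chw_dist_id c)" if "w \<in> space Wt" for w c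
  proof -
    have "(w, I) \<in> space (Wt \<Otimes>\<^sub>M count_space UNIV)" using that by (simp add: space_pair_measure)
    from measurable_compose[OF measurable_Pair1'[OF this] loss_meas]
    have [measurable]: "(\<lambda>z. loss (w, I) z) \<in> borel_measurable PZ" by simp
    have "\<bar>loss (w, c) z - loss (w, I) z\<bar> \<le> K * chw_dist_id c" for z
      using lip[where x = "(w, c)" and x' = "(w, I)"] dt by (simp add: dW_def chw_dist_id_def I_def)
    then have "loss (w, c) z \<le> loss (w, I) z + K * chw_dist_id c" for z
      by (simp add: abs_le_iff algebra_simps)
    then have "L (w, c) \<le> (\<integral>\<^sup>+z. ennreal (loss (w, I) z) + ennreal (K * chw_dist_id c) \<partial>PZ)"
      unfolding L_def using loss_nonneg K chw_dist_id_nonneg[of c]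
      by (intro nn_integral_mono) (simp add: ennreal_leI flip: ennreal_plus)
    also have "\<dots> = L (w, I) + ennreal (K * chw_dist_id c)"
      unfolding L_def by (subst nn_integral_add) (auto simp: PZ.emeasure_space_1)
    finally show ?thesis using K by (simp add: ennreal_mult')
  qed
  have "popL PZ loss (deploy_dist P ch) = (\<integral>\<^sup>+x. L x \<partial>(P \<Otimes>\<^sub>M measure_pmf ch))"
    unfolding popL_def deploy_dist_def L_def ..
  also have "\<dots> \<le> (\<integral>\<^sup>+x. L (fst x, I) + ennreal K * ennreal (chw_dist_id (snd x)) \<partial>(P \<Otimes>\<^sub>M measure_pmf ch))"
    using sets_eq_imp_space_eq[OF P(2)]
    by (intro nn_integral_mono) (clarsimp simp: space_pair_measure L_le)
  also have "\<dots> = (\<integral>\<^sup>+x. L (fst x, I) \<partial>(P \<Otimes>\<^sub>M measure_pmf ch))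
      + (\<integral>\<^sup>+x. ennreal K * ennreal (chw_dist_id (snd x)) \<partial>(P \<Otimes>\<^sub>M measure_pmf ch))"
    by (rule nn_integral_add) measurable
  also have "(\<integral>\<^sup>+x. L (fst x, I) \<partial>(P \<Otimes>\<^sub>M measure_pmf ch)) = (\<integral>\<^sup>+w. L (w, I) \<partial>P)"
    by (subst measure_pmf.nn_integral_fst[symmetric]) (simp_all add: measure_pmf.emeasure_space_1)
  also have "(\<integral>\<^sup>+x. ennreal K * ennreal (chw_dist_id (snd x)) \<partial>(P \<Otimes>\<^sub>M measure_pmf ch))
      = ennreal K * (\<integral>\<^sup>+c. ennreal (chw_dist_id c) \<partial>ch)"
    by (subst Pch.nn_integral_snd[symmetric]) (simp_all add: P.emeasure_space_1 nn_integral_cmult)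
  also have "(\<integral>\<^sup>+w. L (w, I) \<partial>P) = popL PZ loss (train_dist P)"
    unfolding L_def I_def using popL_train_dist[OF PZ P(2) loss_meas] by (simp add: popL_def)
  finally show ?thesis .
qed

lemma popL_deploy_bec_le:
  fixes loss :: "'w \<times> 'd::finite chw \<Rightarrow> 'z \<Rightarrow> real"
  assumes PZ: "prob_space PZ" and P: "prob_space P" "sets P = sets Wt"
    and loss_nonneg: "\<And>x z. 0 \<le> loss x z"
    and loss_meas: "(\<lambda>(x, z). loss x z) \<in> borel_measurable ((Wt \<Otimes>\<^sub>M count_space UNIV) \<Otimes>\<^sub>M PZ)"
    and lip: "\<And>z x x'. \<bar>loss x z - loss x' z\<bar> \<le> K * dW dt x x'"
    and dt: "is_metric dt" and po: "0 \<le> po" "po \<le> 1"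
  shows "enn2ereal (popL PZ loss (deploy_dist P (bec po)))
    \<le> enn2ereal (popL PZ (\<lambda>w. loss (w, (mat 1, 0))) P)
      + ereal (K * (\<Sum>r=1..CARD('d). real (CARD('d) choose r) * po^r * (1 - po)^(CARD('d) - r) * sqrt (real r)))"
    (is "_ \<le> _ + ereal (K * ?B)")
proof -
  have dt_refl: "\<And>w. dt w w = 0" using dt unfolding is_metric_def by blast
  have K: "0 \<le> K" using lip dt_refl by (rule Lipschitz_dW_const_nonneg)
  have B: "0 \<le> ?B" using po by (intro sum_nonneg) simp
  have "popL PZ loss (deploy_dist P (bec po))
      \<le> popL PZ loss (train_dist P) + ennreal K * (\<integral>\<^sup>+c. ennreal (chw_dist_id c) \<partial>(bec po :: 'd chw pmf))"
    by (rule popL_deploy_dist_le[OF PZ P loss_nonneg loss_meas lip dt_refl K])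
  also have "\<dots> = popL PZ (\<lambda>w. loss (w, (mat 1, 0))) P + ennreal (K * ?B)"
    using K by (simp add: popL_train_dist[OF PZ P(2) loss_meas] nn_integral_chw_dist_id_bec[OF po] ennreal_mult')
  finally show ?thesis
    using K B by (simp add: less_eq_ennreal.rep_eq plus_ennreal.rep_eq)
qed

theorem mainTheorem3:
  fixes PZ :: "'z measure" and n :: nat
    and Wt :: "'w measure"
    and dt :: "'w \<Rightarrow> 'w \<Rightarrow> real"
    and alg :: "(nat \<Rightarrow> 'z) \<Rightarrow> 'w measure"
    and loss :: "('w \<times> 'd::finite chw) \<Rightarrow> 'z \<Rightarrow> real"
    and po \<sigma> K :: real
    and Q :: "'w measure"
    and k \<epsilon> :: real
  assumes PZ: "prob_space PZ"
    and n: "n > 0"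
    and alg: "alg \<in> PiM {..<n} (\<lambda>_. PZ) \<rightarrow>\<^sub>M prob_algebra Wt"
    and dt: "is_metric dt"
    and po: "0 \<le> po" "po \<le> 1"
    and loss_nonneg: "\<And>w z. loss w z \<ge> 0"
    and loss_meas: "(\<lambda>(w, z). loss w z) \<in> borel_measurable ((Wt \<Otimes>\<^sub>M count_space UNIV) \<Otimes>\<^sub>M PZ)"
    and subg: "\<And>w. subgaussian PZ (loss w) \<sigma>"
    and lip: "\<And>z w w'. \<bar>loss w z - loss w' z\<bar> \<le> K * dW dt w w'"
    and Q: "Q \<in> space (prob_algebra Wt)"
    and k: "k > 0"
    and eps: "0 < \<epsilon>" "\<epsilon> < 1"
  shows "\<exists>A \<in> sets (PiM {..<n} (\<lambda>_. PZ)).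
           A \<subseteq> {S \<in> space (PiM {..<n} (\<lambda>_. PZ)).
                 enn2ereal (popL PZ loss (deploy_dist (alg S) (bec po)))
                 \<le> enn2ereal (empL loss n S (train_dist (alg S)))
                   + ereal (k * \<sigma>^2 / (2 * real n))
                   + (KL (alg S) Q - ereal (ln \<epsilon>)) / ereal k
                   + ereal (K * (\<Sum>r=1..CARD('d). real (CARD('d) choose r) * po^r
                                   * (1 - po)^(CARD('d) - r) * sqrt (real r)))}
           \<and> measure (PiM {..<n} (\<lambda>_. PZ)) A \<ge> 1 - \<epsilon>"
proof -
  let ?\<Omega> = "PiM {..<n} (\<lambda>_. PZ)"
  define l where "l = (\<lambda>w. loss (w, (mat 1, 0)))"
  have "(\<lambda>(w, z). l w z) \<in> borel_measurable (Wt \<Otimes>\<^sub>M PZ)" unfolding l_def using loss_meas by measurable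
  from pac_bayes_subgaussian[OF PZ n Q _ this _ k eps(1)] loss_nonneg subg
  obtain A where A: "A \<in> sets ?\<Omega>" "1 - \<epsilon> \<le> measure ?\<Omega> A" and pac_bayes: "\<And>S P. S \<in> A \<Longrightarrow>
      P \<in> space (prob_algebra Wt) \<Longrightarrow> enn2ereal (popL PZ l P) \<le> enn2ereal (empL l n S P)
        + ereal (k * \<sigma>^2 / (2 * real n)) + (KL P Q - ereal (ln \<epsilon>)) / ereal k"
    unfolding l_def by blast
  have "A \<subseteq> space ?\<Omega>" using A(1) by (rule sets.sets_into_space)
  moreover have "enn2ereal (popL PZ loss (deploy_dist (alg S) (bec po)))
      \<le> enn2ereal (empL loss n S (train_dist (alg S))) + ereal (k * \<sigma>^2 / (2 * real n))
        + (KL (alg S) Q - ereal (ln \<epsilon>)) / ereal k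
        + ereal (K * (\<Sum>r=1..CARD('d). real (CARD('d) choose r) * po^r * (1 - po)^(CARD('d) - r) * sqrt (real r)))"
    if S: "S \<in> A" for S
  proof -
    have S_space: "S \<in> space ?\<Omega>" using S \<open>A \<subseteq> space ?\<Omega>\<close> by blast
    then have P: "alg S \<in> space (prob_algebra Wt)" by (rule measurable_space[OF alg])
    then have "prob_space (alg S)" "sets (alg S) = sets Wt" by (simp_all add: space_prob_algebra)
    note deploy = popL_deploy_bec_le[OF PZ this loss_nonneg loss_meas lip dt po]
    have "S i \<in> space PZ" if "i < n" for i using S_space that by (auto simp: space_PiM)
    from empL_train_dist[OF \<open>sets (alg S) = sets Wt\<close> this loss_meas]
    show ?thesis using order_trans[OF deploy add_right_mono[OF pac_bayes[OF S P, unfolded l_def]]] by simp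
  qed
  ultimately show ?thesis using A by blast
qed

end
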